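(* Let $G$ be a group with a surjective homomorphism $f\colon G\to\mathbb{Z}$ with kernel $N$. If $N$ is not finitely generated, then no lexicographic left-order on $G$ where $\mathbb{Z}$ leads is regular.
   Context: A positive cone of a group $H$ is a subsemigroup $P$ with $H=P\sqcup P^{-1}\sqcup\{1\}$. A lexicographic left-order on $G$ where $\mathbb{Z}$ leads is one with positive cone $f^{-1}(P_{\mathbb{Z}})\cup P_N$ for a positive cone $P_{\mathbb{Z}}$ of $\mathbb{Z}$ and a positive cone $P_N$ of $N$. A left-order is regular if $G$ is finitely generated and there are a finite set $X$, a surjective monoid homomorphism $\pi\colon X^*\to G$ and a language $\mathcal{L}\subseteq X^*$ accepted by a finite state automaton with $\pi(\mathcal{L})$ equal to the positive cone. *)

theory Defs
  imports "HOL-Algebra.Algebra"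
begin

definition positive_cone :: "('a, 'b) monoid_scheme \<Rightarrow> 'a set \<Rightarrow> 'a set \<Rightarrow> bool" where
  "positive_cone G H P \<longleftrightarrow>
     P \<subseteq> H \<and>
     (\<forall>a\<in>P. \<forall>b\<in>P. a \<otimes>\<^bsub>G\<^esub> b \<in> P) \<and>
     H = P \<union> (\<lambda>x. inv\<^bsub>G\<^esub> x) ` P \<union> {\<one>\<^bsub>G\<^esub>} \<and>
     P \<inter> (\<lambda>x. inv\<^bsub>G\<^esub> x) ` P = {} \<and>
     \<one>\<^bsub>G\<^esub> \<notin> P \<and> \<one>\<^bsub>G\<^esub> \<notin> (\<lambda>x. inv\<^bsub>G\<^esub> x) ` P"

text \<open>Positive cone of the lexicographic left-order on G where Z leads.\<close>
definition lex_cone :: "('a, 'b) monoid_scheme \<Rightarrow> ('a \<Rightarrow> int) \<Rightarrow> int set \<Rightarrow> 'a set \<Rightarrow> 'a set" where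
  "lex_cone G f PZ PN = {g \<in> carrier G. f g \<in> PZ} \<union> PN"

definition finitely_generated_group :: "('a, 'b) monoid_scheme \<Rightarrow> bool" where
  "finitely_generated_group G \<longleftrightarrow>
     (\<exists>S. finite S \<and> S \<subseteq> carrier G \<and> generate G S = carrier G)"

definition free_monoid_hom :: "('a, 'b) monoid_scheme \<Rightarrow> 'x set \<Rightarrow> ('x list \<Rightarrow> 'a) \<Rightarrow> bool" where
  "free_monoid_hom G A h \<longleftrightarrow>
     (\<forall>w\<in>lists A. h w \<in> carrier G) \<and>
     h [] = \<one>\<^bsub>G\<^esub> \<and>
     (\<forall>u\<in>lists A. \<forall>v\<in>lists A. h (u @ v) = h u \<otimes>\<^bsub>G\<^esub> h v)"

definition dfa_run :: "('q \<Rightarrow> 'x \<Rightarrow> 'q) \<Rightarrow> 'q \<Rightarrow> 'x list \<Rightarrow> 'q" where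
  "dfa_run \<delta> q w = foldl \<delta> q w"

definition fsa_accepted :: "'x set \<Rightarrow> 'x list set \<Rightarrow> bool" where
  "fsa_accepted A L \<longleftrightarrow>
     (\<exists>(Q :: nat set) q0 \<delta> F.
        finite Q \<and> q0 \<in> Q \<and> F \<subseteq> Q \<and>
        (\<forall>q\<in>Q. \<forall>x\<in>A. \<delta> q x \<in> Q) \<and>
        L = {w \<in> lists A. dfa_run \<delta> q0 w \<in> F})"

definition regular_cone :: "('a, 'b) monoid_scheme \<Rightarrow> 'a set \<Rightarrow> bool" where
  "regular_cone G P \<longleftrightarrow>
     finitely_generated_group G \<and>
     (\<exists>(A :: nat set) h L.
        finite A \<and> free_monoid_hom G A h \<and> h ` lists A = carrier G \<and>
        L \<subseteq> lists A \<and> fsa_accepted A L \<and> h ` L = P)"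

end

theory Submission
  imports Defs
begin

text \<open>Suppose the lexicographic cone were the image of a regular language L, accepted by an
  automaton with n states. By the pumping lemma every w \<in> L longer than n splits as x y z
  with |x y| \<le> n, y nonempty, and x z, x y y z \<in> L. If f(w) = 0 these two words have
  f-values -f(y) and f(y); both lie in P_Z \<union> {0}, so f(y) = 0. Then
  w = (x y x^-1) (x z) with x z shorter, and induction on the length shows that every
  element of P_N is a product of the finitely many kernel elements x y x^-1 with
  |x|, |y| \<le> n. These generate N = P_N \<union> P_N^-1 \<union> {1}, so N is finitely generated.\<close>

lemma dfa_run_Nil [simp]: "dfa_run \<delta> q [] = q"
  by (simp add: dfa_run_def)

lemma dfa_run_append [simp]: "dfa_run \<delta> q (u @ v) = dfa_run \<delta> (dfa_run \<delta> q u) v"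
  by (simp add: dfa_run_def)

lemma dfa_run_closed:
  assumes "\<forall>q\<in>Q. \<forall>x\<in>A. \<delta> q x \<in> Q" "q \<in> Q" "w \<in> lists A"
  shows "dfa_run \<delta> q w \<in> Q"
  using assms(2,3) unfolding dfa_run_def by (induction w arbitrary: q) (use assms(1) in auto)

lemma dfa_run_loop_power:
  assumes "dfa_run \<delta> q y = q"
  shows "dfa_run \<delta> q (concat (replicate k y)) = q"
  by (induction k) (simp_all add: assms)

lemma dfa_run_loop_exists:
  assumes "finite Q" "\<forall>q\<in>Q. \<forall>x\<in>A. \<delta> q x \<in> Q" "q \<in> Q" "w \<in> lists A" "card Q < length w"
  obtains x y z where "w = x @ y @ z" "y \<noteq> []" "length (x @ y) \<le> card Q"
    "dfa_run \<delta> (dfa_run \<delta> q x) y = dfa_run \<delta> q x"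
proof -
  define s where "s i = dfa_run \<delta> q (take i w)" for i
  have "s ` {0..card Q} \<subseteq> Q"
    using assms(4) by (auto simp: s_def in_lists_conv_set intro!: dfa_run_closed[OF assms(2,3)]
        dest: in_set_takeD)
  then have "\<not> inj_on s {0..card Q}"
    using card_inj_on_le[OF _ _ \<open>finite Q\<close>] by fastforce
  then obtain i j where ij: "i < j" "j \<le> card Q" "s i = s j"
    unfolding inj_on_def by (metis atLeastAtMost_iff linorder_neqE_nat)
  show thesis
  proof
    show "w = take i w @ drop i (take j w) @ drop j w"
      using \<open>i < j\<close> by (metis append.assoc append_take_drop_id less_imp_le min.absorb1 take_take)
    show "drop i (take j w) \<noteq> []" and "length (take i w @ drop i (take j w)) \<le> card Q"
      using ij assms(5) by auto
    have "take j w = take i w @ drop i (take j w)"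
      using \<open>i < j\<close> by (metis append_take_drop_id less_imp_le min.absorb1 take_take)
    then show "dfa_run \<delta> (dfa_run \<delta> q (take i w)) (drop i (take j w)) = dfa_run \<delta> q (take i w)"
      using ij(3) unfolding s_def by (metis dfa_run_append)
  qed
qed

definition pumping_length :: "'x list set \<Rightarrow> nat \<Rightarrow> bool" where
  "pumping_length L n \<longleftrightarrow>
     (\<forall>w\<in>L. n < length w \<longrightarrow>
        (\<exists>x y z. w = x @ y @ z \<and> y \<noteq> [] \<and> length (x @ y) \<le> n \<and>
           (\<forall>k. x @ concat (replicate k y) @ z \<in> L)))"

lemma fsa_accepted_pumping_length:
  assumes "fsa_accepted A L"
  shows "\<exists>n. pumping_length L n"
proof -
  obtain Q :: "nat set" and q0 \<delta> F where Q: "finite Q" "\<forall>q\<in>Q. \<forall>x\<in>A. \<delta> q x \<in> Q" "q0 \<in> Q"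
    and L: "L = {w \<in> lists A. dfa_run \<delta> q0 w \<in> F}"
    using assms unfolding fsa_accepted_def by blast
  have "\<exists>x y z. w = x @ y @ z \<and> y \<noteq> [] \<and> length (x @ y) \<le> card Q \<and>
      (\<forall>k. x @ concat (replicate k y) @ z \<in> L)"
    if "w \<in> L" and long: "card Q < length w" for w
  proof -
    have w: "w \<in> lists A" "dfa_run \<delta> q0 w \<in> F"
      using that(1) L by auto
    obtain x y z where xyz: "w = x @ y @ z" "y \<noteq> []" "length (x @ y) \<le> card Q"
      and loop: "dfa_run \<delta> (dfa_run \<delta> q0 x) y = dfa_run \<delta> q0 x"
      using dfa_run_loop_exists[OF Q w(1) long] by blast
    have "x @ concat (replicate k y) @ z \<in> L" for k
      using w xyz dfa_run_loop_power[OF loop, of k] by (auto simp: L loop)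
    with xyz show ?thesis
      by blast
  qed
  then show ?thesis
    unfolding pumping_length_def by blast
qed

lemma (in group) m_assoc_conj:
  assumes "a \<in> carrier G" "b \<in> carrier G" "c \<in> carrier G"
  shows "a \<otimes> (b \<otimes> c) = (a \<otimes> b \<otimes> inv a) \<otimes> (a \<otimes> c)"
proof -
  have "inv a \<otimes> (a \<otimes> c) = c"
    using assms by (simp flip: m_assoc)
  then show ?thesis
    using assms by (simp add: m_assoc)
qed

lemma free_monoid_hom_append_integer:
  assumes "f \<in> hom G integer_group" "free_monoid_hom G A h" "u \<in> lists A" "v \<in> lists A"
  shows "f (h (u @ v)) = f (h u) + f (h v)"
  using assms hom_mult[OF assms(1)] unfolding free_monoid_hom_def by simp

lemma pumped_factor_in_kernel:
  assumes "f \<in> hom G integer_group" "free_monoid_hom G A h"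
    and "x \<in> lists A" "y \<in> lists A" "z \<in> lists A" "f (h (x @ y @ z)) = 0"
    and "f (h (x @ z)) \<in> insert 0 PZ" "f (h (x @ y @ y @ z)) \<in> insert 0 PZ"
    and "PZ \<inter> uminus ` PZ = {}"
  shows "f (h y) = 0"
proof -
  note f_append = free_monoid_hom_append_integer[OF assms(1,2)]
  have "f (h (x @ z)) = - f (h y)" "f (h (x @ y @ y @ z)) = f (h y)"
    using assms(3-6) by (simp_all add: f_append)
  then show ?thesis
    using assms(7-9) by force
qed

lemma positive_cone_subset_generate:
  assumes "group G" "positive_cone G H P" "S \<subseteq> carrier G" "P \<subseteq> generate G S"
  shows "H \<subseteq> generate G S"
proof -
  have "subgroup (generate G S) G"
    using group.generate_is_subgroup[OF assms(1,3)] .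
  then show ?thesis
    using assms(2,4) unfolding positive_cone_def
    by (auto intro: subgroup.m_inv_closed subgroup.one_closed)
qed

lemma lex_cone_sign:
  assumes "positive_cone G (kernel G integer_group f) PN" "g \<in> lex_cone G f PZ PN"
  shows "f g \<in> insert 0 PZ"
  using assms unfolding positive_cone_def lex_cone_def kernel_def by auto

definition bounded_kernel_conjugates ::
    "('a, 'b) monoid_scheme \<Rightarrow> ('a \<Rightarrow> int) \<Rightarrow> ('x list \<Rightarrow> 'a) \<Rightarrow> 'x set \<Rightarrow> nat \<Rightarrow> 'a set" where
  "bounded_kernel_conjugates G f h A n =
     {h x \<otimes>\<^bsub>G\<^esub> h y \<otimes>\<^bsub>G\<^esub> inv\<^bsub>G\<^esub> h x | x y.
        x \<in> lists A \<and> y \<in> lists A \<and> length x \<le> n \<and> length y \<le> n \<and> f (h y) = 0}"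

lemma finite_bounded_kernel_conjugates:
  assumes "finite A"
  shows "finite (bounded_kernel_conjugates G f h A n)"
proof -
  define W where "W = {w. set w \<subseteq> A \<and> length w \<le> n}"
  have "finite W"
    unfolding W_def using finite_lists_length_le[OF assms] .
  moreover have "bounded_kernel_conjugates G f h A n
      \<subseteq> (\<lambda>(x, y). h x \<otimes>\<^bsub>G\<^esub> h y \<otimes>\<^bsub>G\<^esub> inv\<^bsub>G\<^esub> h x) ` (W \<times> W)"
    unfolding bounded_kernel_conjugates_def W_def by (auto simp: in_lists_conv_set)
  ultimately show ?thesis
    by (meson finite_SigmaI finite_imageI finite_subset)
qed

lemma bounded_kernel_conjugates_subset_kernel:
  assumes "group G" "f \<in> hom G integer_group" "free_monoid_hom G A h"
  shows "bounded_kernel_conjugates G f h A n \<subseteq> kernel G integer_group f"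
proof -
  interpret group_hom G integer_group f
    using assms(1,2) by (simp add: group_hom_def group_hom_axioms_def)
  have carrier: "h w \<in> carrier G" if "w \<in> lists A" for w
    using assms(3) that unfolding free_monoid_hom_def by blast
  have "h x \<otimes>\<^bsub>G\<^esub> h y \<otimes>\<^bsub>G\<^esub> inv\<^bsub>G\<^esub> h x \<in> kernel G integer_group f"
    if "x \<in> lists A" "y \<in> lists A" "f (h y) = 0" for x y
    using that carrier by (simp add: kernel_def hom_mult)
  then show ?thesis
    unfolding bounded_kernel_conjugates_def by blast
qed

lemma kernel_word_in_generate_bounded_conjugates:
  fixes G (structure)
  assumes "group G" "f \<in> hom G integer_group" "free_monoid_hom G A h" "L \<subseteq> lists A"
    and pumping: "pumping_length L n"
    and sign: "\<And>w. w \<in> L \<Longrightarrow> f (h w) \<in> insert 0 PZ"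
    and PZ: "PZ \<inter> uminus ` PZ = {}"
  shows "w \<in> L \<Longrightarrow> f (h w) = 0 \<Longrightarrow> h w \<in> generate G (bounded_kernel_conjugates G f h A n)"
proof (induction "length w" arbitrary: w rule: less_induct)
  case less
  interpret group G by fact
  have w: "w \<in> lists A"
    using less.prems(1) assms(4) by blast
  have h: "h [] = \<one>" "\<And>u. u \<in> lists A \<Longrightarrow> h u \<in> carrier G"
    "\<And>u v. u \<in> lists A \<Longrightarrow> v \<in> lists A \<Longrightarrow> h (u @ v) = h u \<otimes> h v"
    using assms(3) unfolding free_monoid_hom_def by blast+
  show ?case
  proof (cases "length w \<le> n")
    case True
    have "h [] \<otimes> h w \<otimes> inv (h []) \<in> bounded_kernel_conjugates G f h A n"
      unfolding bounded_kernel_conjugates_def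
      by (intro CollectI exI[of _ "[]"] exI[of _ w]) (use True w less.prems(2) in simp)
    then show ?thesis
      using h(1) h(2)[OF w] by (simp add: generate.incl)
  next
    case False
    then obtain x y z where xyz: "w = x @ y @ z" "y \<noteq> []" "length (x @ y) \<le> n"
      and pumps: "\<forall>k. x @ concat (replicate k y) @ z \<in> L"
      using pumping less.prems(1) unfolding pumping_length_def not_le by blast
    have pumped: "x @ z \<in> L" "x @ y @ y @ z \<in> L"
      using pumps[rule_format, of 0] pumps[rule_format, of 2] by (simp_all add: numeral_2_eq_2)
    have xyz_lists: "x \<in> lists A" "y \<in> lists A" "z \<in> lists A"
      using w xyz(1) by auto
    have y_kernel: "f (h y) = 0"
      using pumped_factor_in_kernel[OF assms(2,3) xyz_lists _ sign[OF pumped(1)] sign[OF pumped(2)] PZ]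
        less.prems(2) xyz(1) by blast
    have "f (h (x @ z)) = 0"
      using less.prems(2) xyz_lists y_kernel
      by (simp add: xyz(1) free_monoid_hom_append_integer[OF assms(2,3)])
    moreover have "length (x @ z) < length w"
      using xyz by simp
    ultimately have "h (x @ z) \<in> generate G (bounded_kernel_conjugates G f h A n)"
      using less.hyps pumped(1) by blast
    moreover have "h x \<otimes> h y \<otimes> inv (h x) \<in> bounded_kernel_conjugates G f h A n"
      unfolding bounded_kernel_conjugates_def
      by (intro CollectI exI[of _ x] exI[of _ y]) (use xyz(3) xyz_lists y_kernel in simp)
    moreover have "h w = (h x \<otimes> h y \<otimes> inv (h x)) \<otimes> h (x @ z)"
    proof -
      have "h w = h x \<otimes> (h y \<otimes> h z)"
        using xyz_lists by (simp add: xyz(1) h)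
      also have "\<dots> = (h x \<otimes> h y \<otimes> inv (h x)) \<otimes> (h x \<otimes> h z)"
        using xyz_lists by (intro m_assoc_conj h)
      finally show ?thesis
        using xyz_lists by (simp add: h)
    qed
    ultimately show ?thesis
      by (simp add: generate.eng generate.incl)
  qed
qed

theorem lemma3p11:
  fixes G :: "('a, 'b) monoid_scheme" and f :: "'a \<Rightarrow> int"
  assumes "group G"
    and "f \<in> hom G integer_group"
    and "f ` carrier G = UNIV"
    and "\<not> (\<exists>S. finite S \<and> S \<subseteq> kernel G integer_group f \<and>
                 generate G S = kernel G integer_group f)"
  shows "\<forall>PZ PN. positive_cone integer_group UNIV PZ \<and>
                positive_cone G (kernel G integer_group f) PN
                \<longrightarrow> \<not> regular_cone G (lex_cone G f PZ PN)"
proof (intro allI impI notI, elim conjE)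
  fix PZ PN
  assume PZ: "positive_cone integer_group UNIV PZ"
    and PN: "positive_cone G (kernel G integer_group f) PN"
    and "regular_cone G (lex_cone G f PZ PN)"
  then obtain A :: "nat set" and h L where "finite A" and h: "free_monoid_hom G A h"
    and "L \<subseteq> lists A" "fsa_accepted A L" and L: "h ` L = lex_cone G f PZ PN"
    unfolding regular_cone_def by blast
  obtain n where "pumping_length L n"
    using fsa_accepted_pumping_length[OF \<open>fsa_accepted A L\<close>] by blast
  define S where "S = bounded_kernel_conjugates G f h A n"
  have kernel_subgroup: "subgroup (kernel G integer_group f) G"
    using assms(1,2) by (intro group_hom.subgroup_kernel) (simp add: group_hom_def group_hom_axioms_def)
  have S_kernel: "S \<subseteq> kernel G integer_group f"
    unfolding S_def using bounded_kernel_conjugates_subset_kernel[OF assms(1,2) h] .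
  have sign: "f (h w) \<in> insert 0 PZ" if "w \<in> L" for w
    using lex_cone_sign[OF PN] L that by blast
  have PZ_disjoint: "PZ \<inter> uminus ` PZ = {}"
    using PZ unfolding positive_cone_def by simp
  have PN_kernel: "PN \<subseteq> kernel G integer_group f"
    using PN unfolding positive_cone_def by blast
  have "PN \<subseteq> generate G S"
  proof
    fix p assume "p \<in> PN"
    then obtain w where "w \<in> L" "p = h w"
      using L unfolding lex_cone_def by blast
    moreover have "f (h w) = 0"
      using \<open>p \<in> PN\<close> PN_kernel \<open>p = h w\<close> by (auto simp: kernel_def)
    ultimately show "p \<in> generate G S"
      unfolding S_def using kernel_word_in_generate_bounded_conjugates[OF assms(1,2) h
          \<open>L \<subseteq> lists A\<close> \<open>pumping_length L n\<close> sign PZ_disjoint] by blast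
  qed
  then have "kernel G integer_group f \<subseteq> generate G S"
    using positive_cone_subset_generate[OF assms(1) PN] S_kernel by (auto simp: kernel_def)
  moreover have "generate G S \<subseteq> kernel G integer_group f"
    using group.generate_subgroup_incl[OF assms(1) S_kernel kernel_subgroup] .
  moreover have "finite S"
    unfolding S_def using finite_bounded_kernel_conjugates[OF \<open>finite A\<close>] .
  ultimately show False
    using assms(4) S_kernel by blast
qed

end
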